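(* There does not exist a real linear map $\phi \colon M_2 \to \mathcal H_2$ such that $\phi(\mathcal U_2) \subset \mathcal H_2 \cap \mathcal U_2$.
   Context: $M_2$ is the set of $2\times 2$ complex matrices, $\mathcal U_2$ the unitary ones, and $\mathcal H_2$ the real vector space of $2\times2$ complex hermitian matrices. *)

theory Defs
  imports "HOL-Analysis.Analysis"
begin

definition conj_transpose :: "complex^2^2 \<Rightarrow> complex^2^2" where
  "conj_transpose A = (\<chi> i j. cnj (A $ j $ i))"

definition hermitian2 :: "complex^2^2 \<Rightarrow> bool" where
  "hermitian2 A \<longleftrightarrow> conj_transpose A = A"

definition unitary2 :: "complex^2^2 \<Rightarrow> bool" where
  "unitary2 U \<longleftrightarrow> U ** conj_transpose U = mat 1 \<and> conj_transpose U ** U = mat 1"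

end

theory Submission
  imports Defs
begin

text \<open>
  The unit quaternions, realised as the unitary matrices \<open>[[\<alpha>, \<beta>], [-cnj \<beta>, cnj \<alpha>]]\<close>,
  form the unit sphere of a real 4-dimensional subspace of \<open>M\<^sub>2\<close>. Composing \<open>\<phi>\<close> with this
  embedding gives a real linear map \<open>\<psi>\<close> on \<open>\<real>\<^sup>4\<close> sending unit vectors to hermitian
  involutions. Expanding \<open>\<psi>(s x + t y)\<^sup>2 = 1\<close> for orthonormal \<open>x, y\<close> and \<open>s\<^sup>2 + t\<^sup>2 = 1\<close> shows
  that \<open>\<psi>\<close> maps an orthonormal basis to four pairwise anticommuting hermitian involutions.
  But for hermitian \<open>A, B\<close> the real part of the (1,1) entry of \<open>AB + BA\<close> is twice the
  euclidean inner product of \<open>(A\<^sub>1\<^sub>1, Re A\<^sub>1\<^sub>2, Im A\<^sub>1\<^sub>2) \<in> \<real>\<^sup>3\<close> with the same vector for \<open>B\<close>,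
  so such a family would be an orthonormal family of four vectors in \<open>\<real>\<^sup>3\<close>.
\<close>

lemma matrix_mult_scaleR_add_square:
  fixes A B :: "'a::real_algebra_1^'n^'n"
  shows "(s *\<^sub>R A + t *\<^sub>R B) ** (s *\<^sub>R A + t *\<^sub>R B)
       = s\<^sup>2 *\<^sub>R (A ** A) + t\<^sup>2 *\<^sub>R (B ** B) + (s * t) *\<^sub>R (A ** B + B ** A)"
  by (simp add: vec_eq_iff matrix_matrix_mult_def sum.distrib scaleR_sum_right
      algebra_simps power2_eq_square)

lemma anticommute_if_involutions:
  fixes A B :: "'a::real_algebra_1^'n^'n"
  assumes "A ** A = mat 1" "B ** B = mat 1"
    and "(s *\<^sub>R A + t *\<^sub>R B) ** (s *\<^sub>R A + t *\<^sub>R B) = mat 1"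
    and "s\<^sup>2 + t\<^sup>2 = 1" "s * t \<noteq> 0"
  shows "A ** B + B ** A = 0"
proof -
  have "(s * t) *\<^sub>R (A ** B + B ** A) = mat 1 - (s\<^sup>2 + t\<^sup>2) *\<^sub>R mat 1"
    using assms(1-3) by (simp add: matrix_mult_scaleR_add_square algebra_simps)
  then show ?thesis
    using assms(4,5) by simp
qed

lemma anticommute_if_orthonormal:
  fixes \<psi> :: "'a::real_inner \<Rightarrow> 'b::real_algebra_1^'n^'n"
  assumes "linear \<psi>" and involution: "\<And>x. norm x = 1 \<Longrightarrow> \<psi> x ** \<psi> x = mat 1"
    and "norm x = 1" "norm y = 1" "x \<bullet> y = 0"
  shows "\<psi> x ** \<psi> y + \<psi> y ** \<psi> x = 0"
proof (rule anticommute_if_involutions)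
  have "x \<bullet> x = 1" "y \<bullet> y = 1"
    using assms(3,4) by (simp_all add: norm_eq_1)
  then have "norm ((3/5) *\<^sub>R x + (4/5) *\<^sub>R y) = 1"
    unfolding norm_eq_1 using assms(5) by (simp add: algebra_simps inner_commute)
  then have "\<psi> ((3/5) *\<^sub>R x + (4/5) *\<^sub>R y) ** \<psi> ((3/5) *\<^sub>R x + (4/5) *\<^sub>R y) = mat 1"
    by (rule involution)
  then show "((3/5) *\<^sub>R \<psi> x + (4/5) *\<^sub>R \<psi> y) ** ((3/5) *\<^sub>R \<psi> x + (4/5) *\<^sub>R \<psi> y) = mat 1"
    using \<open>linear \<psi>\<close> by (simp add: linear_add linear_cmul)
qed (use assms in \<open>simp_all add: power2_eq_square\<close>)

lemma matrix_mult_2_nth: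
  "((A::'a::semiring_1^2^2) ** B) $ i $ j = A$i$1 * B$1$j + A$i$2 * B$2$j"
  by (simp add: matrix_matrix_mult_def sum_2)

lemma hermitian2_nth:
  assumes "hermitian2 A"
  shows "A$i$j = cnj (A$j$i)"
proof -
  have "conj_transpose A $ i $ j = A $ i $ j"
    using assms by (simp add: hermitian2_def)
  then show ?thesis
    by (simp add: conj_transpose_def)
qed

lemma involution_if_hermitian2_unitary2: "hermitian2 H \<Longrightarrow> unitary2 H \<Longrightarrow> H ** H = mat 1"
  by (simp add: hermitian2_def unitary2_def)

definition quaternion_matrix :: "real^4 \<Rightarrow> complex^2^2" where
  "quaternion_matrix x =
     vector [vector [Complex (x$1) (x$2), Complex (x$3) (x$4)],
             vector [Complex (- x$3) (x$4), Complex (x$1) (- x$2)]]"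

lemma quaternion_matrix_nth [simp]:
  "quaternion_matrix x $ 1 $ 1 = Complex (x$1) (x$2)"
  "quaternion_matrix x $ 1 $ 2 = Complex (x$3) (x$4)"
  "quaternion_matrix x $ 2 $ 1 = Complex (- x$3) (x$4)"
  "quaternion_matrix x $ 2 $ 2 = Complex (x$1) (- x$2)"
  by (simp_all add: quaternion_matrix_def)

lemma linear_quaternion_matrix: "linear quaternion_matrix"
  by (rule linearI) (simp_all add: vec_eq_iff forall_2 complex_eq_iff)

lemma unitary2_quaternion_matrix:
  assumes "norm x = 1"
  shows "unitary2 (quaternion_matrix x)"
proof -
  have "(x$1)\<^sup>2 + (x$2)\<^sup>2 + (x$3)\<^sup>2 + (x$4)\<^sup>2 = 1"
    using assms by (simp add: norm_eq_1 inner_vec_def sum_4 power2_eq_square)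
  then show ?thesis
    unfolding unitary2_def conj_transpose_def
    by (simp add: vec_eq_iff forall_2 matrix_mult_2_nth mat_def complex_eq_iff
        algebra_simps power2_eq_square)
qed

definition hermitian_coords :: "complex^2^2 \<Rightarrow> real^3" where
  "hermitian_coords A = vector [Re (A$1$1), Re (A$1$2), Im (A$1$2)]"

lemma Re_anticommutator_11_eq_inner:
  assumes "hermitian2 A" "hermitian2 B"
  shows "Re ((A ** B + B ** A)$1$1) = 2 * (hermitian_coords A \<bullet> hermitian_coords B)"
proof -
  have "A$2$1 = cnj (A$1$2)" "B$2$1 = cnj (B$1$2)"
    using assms by (simp_all only: hermitian2_nth[of _ 2 1])
  moreover have "Im (A$1$1) = 0" "Im (B$1$1) = 0"
    using arg_cong[OF hermitian2_nth[OF assms(1), of 1 1], of Im]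
      arg_cong[OF hermitian2_nth[OF assms(2), of 1 1], of Im]
    by simp_all
  ultimately have "Re ((A ** B + B ** A)$1$1)
      = 2 * (Re (A$1$1) * Re (B$1$1) + Re (A$1$2) * Re (B$1$2) + Im (A$1$2) * Im (B$1$2))"
    by (simp add: matrix_mult_2_nth)
  also have "\<dots> = 2 * (hermitian_coords A \<bullet> hermitian_coords B)"
    unfolding hermitian_coords_def inner_vec_def sum_3 by simp
  finally show ?thesis .
qed

lemma card_le_3_if_anticommuting_hermitian_involutions:
  fixes A :: "'i::finite \<Rightarrow> complex^2^2"
  assumes hermitian: "\<And>i. hermitian2 (A i)" and involution: "\<And>i. A i ** A i = mat 1"
    and anticommute: "\<And>i j. i \<noteq> j \<Longrightarrow> A i ** A j + A j ** A i = 0"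
  shows "CARD('i) \<le> 3"
proof -
  define v where "v i = hermitian_coords (A i)" for i
  have v_inner: "v i \<bullet> v j = (if i = j then 1 else 0)" for i j
  proof (cases "i = j")
    case True
    show ?thesis
      using Re_anticommutator_11_eq_inner[OF hermitian hermitian, of i i, unfolded involution]
      by (simp add: True v_def mat_def)
  next
    case False
    show ?thesis
      using Re_anticommutator_11_eq_inner[OF hermitian hermitian, of i j, unfolded anticommute[OF False]]
      by (simp add: False v_def)
  qed
  then have "inj v"
    by (metis injI zero_neq_one)
  have "pairwise orthogonal (range v)"
    by (auto simp: pairwise_def orthogonal_def v_inner)
  moreover have "0 \<notin> range v"
    by (metis v_inner imageE inner_zero_left zero_neq_one)
  ultimately have "independent (range v)"
    by (rule pairwise_orthogonal_independent)
  then have "card (range v) \<le> DIM(real^3)"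
    by (rule independent_card_le)
  then show ?thesis
    using card_image[OF \<open>inj v\<close>] by simp
qed

theorem corollary3p6:
  shows "\<not> (\<exists>\<phi> :: complex^2^2 \<Rightarrow> complex^2^2.
            linear \<phi> \<and> (\<forall>A. hermitian2 (\<phi> A)) \<and>
            (\<forall>U. unitary2 U \<longrightarrow> hermitian2 (\<phi> U) \<and> unitary2 (\<phi> U)))"
proof
  assume "\<exists>\<phi> :: complex^2^2 \<Rightarrow> complex^2^2.
            linear \<phi> \<and> (\<forall>A. hermitian2 (\<phi> A)) \<and>
            (\<forall>U. unitary2 U \<longrightarrow> hermitian2 (\<phi> U) \<and> unitary2 (\<phi> U))"
  then obtain \<phi> :: "complex^2^2 \<Rightarrow> complex^2^2" where "linear \<phi>"
    and \<phi>_unitary: "\<And>U. unitary2 U \<Longrightarrow> hermitian2 (\<phi> U) \<and> unitary2 (\<phi> U)"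
    by blast
  define \<psi> where "\<psi> = \<phi> \<circ> quaternion_matrix"
  have "linear \<psi>"
    unfolding \<psi>_def using linear_quaternion_matrix \<open>linear \<phi>\<close> by (rule linear_compose)
  have \<psi>_unit: "hermitian2 (\<psi> x) \<and> \<psi> x ** \<psi> x = mat 1" if "norm x = 1" for x
    using \<phi>_unitary[OF unitary2_quaternion_matrix[OF that]]
    by (simp add: \<psi>_def involution_if_hermitian2_unitary2)
  have "CARD(4) \<le> 3"
  proof (rule card_le_3_if_anticommuting_hermitian_involutions)
    fix i j :: 4
    show "hermitian2 (\<psi> (axis i 1))" "\<psi> (axis i 1) ** \<psi> (axis i 1) = mat 1"
      using \<psi>_unit by simp_all
    show "i \<noteq> j \<Longrightarrow> \<psi> (axis i 1) ** \<psi> (axis j 1) + \<psi> (axis j 1) ** \<psi> (axis i 1) = 0"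
      using \<open>linear \<psi>\<close> \<psi>_unit by (intro anticommute_if_orthonormal) (simp_all add: inner_axis_axis)
  qed
  then show False
    by simp
qed

end
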